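(* Let $A\subset\{1,2,3,\dots\}$ be a set whose natural density $d(A)=\lim_{n\to\infty}\#(A\cap[1,n])/n$ exists and satisfies $d(A)>0$. Then the power series $P_A(z)=\prod_{j\in A}\frac{1}{1-z^j}$, $|z|<1$, belongs to $\mathcal{K}$ (with radius of convergence $1$) and is Gaussian.
   Context: The class $\mathcal{K}$ consists of non-constant power series $f(z)=\sum_{n\ge0}a_nz^n$ with radius of convergence $R\in(0,+\infty]$, with $a_n\ge 0$ for all $n$ and $a_0>0$. For $t\in(0,R)$, $X_t$ is the random variable with $\mathbf{P}(X_t=n)=a_nt^n/f(t)$, $n\ge0$. With $m_f(t)=\mathbf{E}(X_t)$, $\sigma_f^2(t)=\mathbf{V}(X_t)>0$ and $\breve{X}_t=(X_t-m_f(t))/\sigma_f(t)$, $f$ is called Gaussian if $\breve{X}_t$ converges in distribution to a standard normal random variable as $t\uparrow R$. *)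

theory Defs
  imports "HOL-Probability.Probability"
begin

definition in_class_K :: "(nat \<Rightarrow> real) \<Rightarrow> bool" where
  "in_class_K a \<longleftrightarrow> (\<forall>n. a n \<ge> 0) \<and> a 0 > 0 \<and> (\<exists>n>0. a n \<noteq> 0)
      \<and> conv_radius a > 0"

text \<open>f(t), m_f(t) = E X_t, sigma_f^2(t) = V X_t, where P(X_t = n) = a_n t^n / f(t).\<close>

definition ps_val :: "(nat \<Rightarrow> real) \<Rightarrow> real \<Rightarrow> real" where
  "ps_val a t = (\<Sum>n. a n * t ^ n)"

definition ps_mean :: "(nat \<Rightarrow> real) \<Rightarrow> real \<Rightarrow> real" where
  "ps_mean a t = (\<Sum>n. real n * a n * t ^ n) / ps_val a t"

definition ps_var :: "(nat \<Rightarrow> real) \<Rightarrow> real \<Rightarrow> real" where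
  "ps_var a t = (\<Sum>n. (real n - ps_mean a t)\<^sup>2 * a n * t ^ n) / ps_val a t"

definition ps_norm_cdf :: "(nat \<Rightarrow> real) \<Rightarrow> real \<Rightarrow> real \<Rightarrow> real" where
  "ps_norm_cdf a t x =
     (\<Sum>n. if (real n - ps_mean a t) / sqrt (ps_var a t) \<le> x then a n * t ^ n else 0)
       / ps_val a t"

text \<open>Gaussian (for a series in K with finite radius of convergence R):
  convergence in distribution of the normalized X_t to N(0,1) as t tends to R from
  below, expressed via convergence of distribution functions at every point
  (all points are continuity points of the standard normal law).\<close>

definition gaussian_ps :: "(nat \<Rightarrow> real) \<Rightarrow> real \<Rightarrow> bool" where
  "gaussian_ps a R \<longleftrightarrow>
     (\<forall>x::real. ((\<lambda>t. ps_norm_cdf a t x) \<longlongrightarrow> measure std_normal_distribution {..x})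
                 (at_left R))"

text \<open>The infinite product P_A(z) = prod_{j in A} 1/(1 - z^j) as a product over all
  naturals, with factor 1 for j not in A.\<close>

definition PA_factor :: "nat set \<Rightarrow> complex \<Rightarrow> nat \<Rightarrow> complex" where
  "PA_factor A z j = (if j \<in> A then 1 / (1 - z ^ j) else 1)"

end

theory Submission
  imports Defs "HOL-Real_Asymp.Real_Asymp"
begin

(*
  P_A = exp L_A with L_A(z) = sum_{j in A} -log(1 - z^j) = sum_n sigma_A(n)/n z^n, where
  sigma_A(n) is the sum of the divisors of n lying in A.  Comparing coefficients in
  P_A' = L_A' P_A gives Euler's recurrence n p_A(n) = sum_k sigma_A(k) p_A(n - k) for the
  coefficients of P_A; it shows that they are nonnegative, grow subexponentially (and are at
  least 1 on the infinite set A, so the radius of convergence is 1), and that X_t has mean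
  m(t) = sum sigma_A(n) t^n and variance s(t)^2 = sum n sigma_A(n) t^n.

  The characteristic function of (X_t - m(t))/s(t) at u is
  exp (L_A(t e^(i theta)) - L_A(t) - i theta m(t)) with theta = u/s(t), and a second-order
  Taylor expansion of each term puts the exponent within |u|^3 C(t) / (6 s(t)^3) of -u^2/2,
  where C(t) = sum n^2 sigma_A(n) t^n.  Crude divisor counting gives C(t) = O((1-t)^-4).
  Positive density gives s(t)^2 >= c (1-t)^-3: for N ~ 1/(4(1-t)), about d(A) N elements of A
  lie in (N, 2N], each contributing about N^2 to s(t)^2.  Hence the error is O((1-t)^(1/2)),
  and Levy's continuity theorem turns convergence of characteristic functions into
  convergence of distribution functions.
*)

section \<open>Series estimates\<close>

lemma summable_of_nat_power_mult_power:
  fixes t :: real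
  assumes "0 \<le> t" "t < 1"
  shows "summable (\<lambda>n. real n ^ k * t ^ n)"
proof (rule root_test_convergence)
  have "(\<lambda>n. root n (real n) ^ k * t) \<longlonglongrightarrow> 1 ^ k * t"
    by (intro tendsto_intros LIMSEQ_root)
  moreover have "\<forall>\<^sub>F n in sequentially. root n (real n) ^ k * t = root n (norm (real n ^ k * t ^ n))"
    using eventually_gt_at_top[of 0]
    by eventually_elim
       (use assms in \<open>simp add: abs_mult real_root_mult real_root_power real_root_power_cancel\<close>)
  ultimately show "(\<lambda>n. root n (norm (real n ^ k * t ^ n))) \<longlonglongrightarrow> t"
    by (simp add: tendsto_cong)
qed (use assms in simp)

lemma suminf_square_mult_power_le:
  fixes x :: real
  assumes "0 \<le> x" "x < 1"
  shows "(\<Sum>k. real k ^ 2 * x ^ k) \<le> 2 * x / (1 - x) ^ 3"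
proof -
  have prod: "(\<lambda>n. \<Sum>i\<le>n. (real (Suc i) * x ^ i) * x ^ (n - i)) sums (1 / (1 - x) ^ 2 * (1 / (1 - x)))"
    using Cauchy_product_sums[of "\<lambda>n. real (Suc n) * x ^ n" "\<lambda>n. x ^ n"]
      geometric_deriv_sums[of x] geometric_sums[of x] assms
    by (auto simp: sums_iff)
  have coeff: "(\<Sum>i\<le>n. (real (Suc i) * x ^ i) * x ^ (n - i)) = (real n + 1) * (real n + 2) / 2 * x ^ n" for n
  proof -
    have "(\<Sum>i\<le>n. real (Suc i)) = (real n + 1) * (real n + 2) / 2"
      by (induction n) (auto simp: field_simps)
    then show ?thesis
      by (simp add: sum_distrib_right mult.assoc power_add[symmetric] flip: sum_distrib_right)
  qed
  have const: "1 / (1 - x) ^ 2 * (1 / (1 - x)) = 1 / (1 - x) ^ 3"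
    by (simp add: power3_eq_cube power2_eq_square)
  from prod have "(\<lambda>n. (real n + 1) * (real n + 2) / 2 * x ^ n) sums (1 / (1 - x) ^ 3)"
    unfolding coeff const .
  from sums_mult[OF this, of 2]
  have tri: "(\<lambda>n. (real n + 1) * (real n + 2) * x ^ n) sums (2 / (1 - x) ^ 3)"
    by simp
  have shift: "summable (\<lambda>k. real (Suc k) ^ 2 * x ^ k)"
    by (rule summable_comparison_test'[OF sums_summable[OF tri], where N=0])
       (use assms in \<open>auto simp: power2_eq_square algebra_simps intro!: mult_right_mono\<close>)
  have "(\<Sum>k. real k ^ 2 * x ^ k) = x * (\<Sum>k. real (Suc k) ^ 2 * x ^ k)"
    using suminf_split_head[OF summable_of_nat_power_mult_power[OF assms, of 2]] shift
    by (simp add: suminf_mult[symmetric] mult_ac)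
  also have "\<dots> \<le> x * (\<Sum>k. (real k + 1) * (real k + 2) * x ^ k)"
    using assms by (intro mult_left_mono suminf_le shift sums_summable[OF tri])
                   (auto simp: power2_eq_square algebra_simps intro!: mult_right_mono)
  also have "(\<Sum>k. (real k + 1) * (real k + 2) * x ^ k) = 2 / (1 - x) ^ 3"
    using tri by (simp add: sums_iff)
  finally show ?thesis by (simp add: mult.commute)
qed

lemma sums_power_series_product:
  fixes x y :: "nat \<Rightarrow> real" and t :: real
  assumes "\<And>n. 0 \<le> x n * t ^ n" "\<And>n. 0 \<le> y n * t ^ n"
    and "summable (\<lambda>n. x n * t ^ n)" "summable (\<lambda>n. y n * t ^ n)"
  shows "(\<lambda>n. (\<Sum>i\<le>n. x i * y (n - i)) * t ^ n) sums ((\<Sum>n. x n * t ^ n) * (\<Sum>n. y n * t ^ n))"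
proof -
  have "(\<lambda>n. \<Sum>i\<le>n. (x i * t ^ i) * (y (n - i) * t ^ (n - i))) sums
          ((\<Sum>n. x n * t ^ n) * (\<Sum>n. y n * t ^ n))"
    using assms by (intro Cauchy_product_sums) auto
  moreover have "(\<Sum>i\<le>n. (x i * t ^ i) * (y (n - i) * t ^ (n - i))) = (\<Sum>i\<le>n. x i * y (n - i)) * t ^ n" for n
    unfolding sum_distrib_right by (intro sum.cong refl) (simp add: mult_ac flip: power_add)
  ultimately show ?thesis by simp
qed

lemma norm_sums_le:
  fixes f :: "nat \<Rightarrow> 'a :: banach"
  assumes "f sums S" "summable g" "\<And>n. norm (f n) \<le> g n"
  shows "norm S \<le> suminf g"
proof -
  have norm_summable: "summable (\<lambda>n. norm (f n))"
    by (rule summable_comparison_test'[OF assms(2), where N=0]) (use assms(3) in simp)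
  have "norm S = norm (suminf f)"
    using assms(1) by (simp add: sums_iff)
  also have "\<dots> \<le> (\<Sum>n. norm (f n))"
    by (rule summable_norm[OF norm_summable])
  also have "\<dots> \<le> suminf g"
    by (rule suminf_le[OF assms(3) norm_summable assms(2)])
  finally show ?thesis .
qed

lemma of_nat_mult_power_mult_le:
  fixes v :: real
  assumes "0 \<le> v" "v \<le> 1"
  shows "real j * v ^ j * (1 - v) \<le> 1 - v ^ j"
proof -
  have "real j * v ^ j = (\<Sum>i<j. v ^ j)" by simp
  also have "\<dots> \<le> (\<Sum>i<j. v ^ i)"
    using assms by (intro sum_mono power_decreasing) auto
  finally have "real j * v ^ j * (1 - v) \<le> (\<Sum>i<j. v ^ i) * (1 - v)"
    using assms by (intro mult_right_mono) auto
  also have "\<dots> = 1 - v ^ j"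
    by (simp add: one_diff_power_eq mult.commute)
  finally show ?thesis .
qed

lemma cube_mult_power_div_le:
  fixes v :: real
  assumes v: "0 < v" "v < 1" and j: "1 \<le> j"
  shows "real j ^ 3 * (2 * (v ^ 4) ^ j / (1 - (v ^ 4) ^ j) ^ 3) \<le> 2 * v ^ j / (1 - v) ^ 3"
proof -
  have tj: "0 < (v ^ 4) ^ j" "(v ^ 4) ^ j < 1"
    using v j by (auto simp: power_less_one_iff)
  have "(v ^ 4) ^ j \<le> v ^ j"
    using v by (intro power_mono) (auto simp: power_le_one power_decreasing[of 1 4 v, simplified])
  then have "real j * v ^ j * (1 - v) \<le> 1 - (v ^ 4) ^ j"
    using of_nat_mult_power_mult_le[of v j] v by linarith
  then have cube: "(real j * v ^ j) ^ 3 * (1 - v) ^ 3 \<le> (1 - (v ^ 4) ^ j) ^ 3"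
    using v by (auto simp flip: power_mult_distrib intro: power_mono)
  have "real j ^ 3 * (v ^ 4) ^ j = (real j * v ^ j) ^ 3 * v ^ j"
    by (simp add: power_mult_distrib flip: power_mult power_add)
  also have "\<dots> \<le> (1 - (v ^ 4) ^ j) ^ 3 / (1 - v) ^ 3 * v ^ j"
    using cube v by (intro mult_right_mono) (auto simp: field_simps)
  finally show ?thesis
    using tj v by (simp add: field_simps)
qed

lemma norm_power_lt_1:
  fixes z :: "'a :: real_normed_div_algebra"
  assumes "norm z < 1" "1 \<le> j"
  shows "norm (z ^ j) < 1"
  using assms power_decreasing[of 1 j "norm z"] by (simp add: norm_power)

lemma iexp_power: "iexp x ^ n = iexp (real n * x)"
  by (simp add: exp_of_nat_mult[symmetric] mult_ac)

lemma conv_radius_of_real: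
  "conv_radius (\<lambda>n. of_real (f n) :: 'a :: {real_normed_div_algebra, banach}) = conv_radius f"
proof -
  have "conv_radius (\<lambda>n. of_real (f n) :: 'a) = conv_radius (\<lambda>n. norm (of_real (f n) :: 'a))"
    by (rule conv_radius_norm[symmetric])
  also have "\<dots> = conv_radius (\<lambda>n. norm (f n))"
    by simp
  also have "\<dots> = conv_radius f"
    by (rule conv_radius_norm)
  finally show ?thesis .
qed

lemma eval_fps_eq_exp_eval_fps:
  fixes F L :: "complex fps" and r :: real
  assumes deriv: "fps_deriv F = fps_deriv L * F" and at_0: "fps_nth F 0 = exp (fps_nth L 0)"
    and radius: "r \<le> fps_conv_radius F" "r \<le> fps_conv_radius L" and z: "norm z < r"
  shows "eval_fps F z = exp (eval_fps L z)"
proof -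
  define h where "h = (\<lambda>z. eval_fps F z * exp (- eval_fps L z))"
  have "(h has_field_derivative 0) (at w within ball 0 r)" if "w \<in> ball 0 r" for w
  proof -
    have w: "ereal (norm w) < r" using that by simp
    note F = order.strict_trans2[OF w radius(1)] and L = order.strict_trans2[OF w radius(2)]
    note L' = order.strict_trans2[OF L fps_conv_radius_deriv[of L]]
    have "(h has_field_derivative
            eval_fps (fps_deriv F) w * exp (- eval_fps L w)
            - eval_fps F w * exp (- eval_fps L w) * eval_fps (fps_deriv L) w) (at w within ball 0 r)"
      unfolding h_def
      by (auto intro!: derivative_eq_intros has_field_derivative_eval_fps[OF F, THEN DERIV_subset]
                       has_field_derivative_eval_fps[OF L, THEN DERIV_subset])
    also have "eval_fps (fps_deriv F) w = eval_fps (fps_deriv L) w * eval_fps F w"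
      by (subst deriv) (rule eval_fps_mult[OF L' F])
    finally show ?thesis by (simp add: algebra_simps)
  qed
  then obtain c where "\<And>w. w \<in> ball 0 r \<Longrightarrow> h w = c"
    using has_field_derivative_zero_constant[of "ball 0 r" h] by auto
  moreover have "0 \<in> ball 0 r" "z \<in> ball 0 r"
    using z le_less_trans[OF norm_ge_zero z] by auto
  ultimately have "h z = h 0"
    by simp
  also have "h 0 = 1"
    by (simp add: h_def eval_fps_at_0 at_0 exp_minus)
  finally show ?thesis
    by (simp add: h_def exp_minus field_simps)
qed

lemma has_sum_power_div_of_nat:
  fixes w :: complex
  assumes "norm w < 1"
  shows "((\<lambda>n. w ^ n / of_nat n) has_sum - Ln (1 - w)) UNIV"
proof (rule norm_summable_imp_has_sum)
  have "(\<lambda>n. - (w ^ n / of_nat n)) sums Ln (1 - w)"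
    using Ln_series'[of "- w"] assms by simp
  then show "(\<lambda>n. w ^ n / of_nat n) sums - Ln (1 - w)"
    using sums_minus by fastforce
  show "summable (\<lambda>n. norm (w ^ n / of_nat n))"
  proof (rule summable_comparison_test'[OF summable_geometric[of "norm w"], where N=0])
    fix n :: nat
    have "norm w ^ n / real n \<le> norm w ^ n"
      by (cases "n = 0") (auto simp: divide_le_eq intro: mult_left_mono[of 1 "real n", simplified])
    then show "norm (norm (w ^ n / of_nat n)) \<le> norm w ^ n"
      by (simp add: norm_divide norm_power)
  qed (use assms in simp)
qed

lemma abs_summable_on_power_mult_div:
  fixes z :: complex
  assumes "norm z < 1"
  shows "(\<lambda>p. norm (z ^ (fst p * snd p) / of_nat (snd p))) summable_on Sigma {1..} (\<lambda>_. {1..})"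
proof -
  define s where "s = sqrt (norm z)"
  have s: "0 \<le> s" "s < 1" "norm z = s ^ 2"
    using assms unfolding s_def by auto
  have geometric: "((\<lambda>k. s ^ k) has_sum (s / (1 - s))) {1..}"
    using s by (intro has_sum_geometric_from_1) auto
  have "(\<lambda>(j, k). s ^ j * s ^ k) summable_on Sigma {1..} (\<lambda>_. {1..})"
    using s has_sum_cmult_right[OF geometric]
    by (intro summable_on_SigmaI[where g = "\<lambda>j. s ^ j * (s / (1 - s))"]
              summable_on_cmult_left has_sum_imp_summable[OF geometric]) auto
  then show ?thesis
  proof (rule Infinite_Sum.abs_summable_on_comparison_test'[where f = "\<lambda>p. z ^ (fst p * snd p) / of_nat (snd p)"])
    fix p assume "p \<in> Sigma {1::nat..} (\<lambda>_. {1::nat..})"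
    then obtain j k where p: "p = (j, k)" "1 \<le> j" "1 \<le> k" by auto
    \<comment> \<open>\<open>|z|\<^bsup>jk\<^esup> = s\<^bsup>2jk\<^esup> \<le> s\<^bsup>j+k\<^esup>\<close> since \<open>j + k \<le> 2jk\<close>.\<close>
    have "norm (z ^ (j * k) / of_nat k) \<le> norm z ^ (j * k)"
      using p by (simp add: norm_divide norm_power divide_le_eq mult_left_mono[of 1 "real k", simplified])
    also have "\<dots> = s ^ (2 * (j * k))"
      by (simp add: s power_mult)
    also have "\<dots> \<le> s ^ (j + k)"
      using s p by (intro power_decreasing) (auto simp: mult_2 add_mono)
    finally show "norm (z ^ (fst p * snd p) / of_nat (snd p)) \<le> (case p of (j, k) \<Rightarrow> s ^ j * s ^ k)"
      using p by (simp add: power_add)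
  qed
qed

section \<open>Natural density\<close>

lemma card_dyadic_block_tendsto:
  assumes "(\<lambda>n. real (card (A \<inter> {1..n})) / real n) \<longlonglongrightarrow> \<delta>"
  shows "(\<lambda>N. real (card (A \<inter> {N<..2 * N})) / real N) \<longlonglongrightarrow> \<delta>"
proof -
  define d where "d n = real (card (A \<inter> {1..n})) / real n" for n
  have "(\<lambda>N. d (2 * N)) \<longlonglongrightarrow> \<delta>"
    using assms unfolding d_def
    by (rule filterlim_compose) (simp add: filterlim_subseq strict_mono_def)
  then have "(\<lambda>N. 2 * d (2 * N) - d N) \<longlonglongrightarrow> 2 * \<delta> - \<delta>"
    using assms unfolding d_def by (intro tendsto_intros)
  moreover have "\<forall>\<^sub>F N in sequentially. 2 * d (2 * N) - d N = real (card (A \<inter> {N<..2 * N})) / real N"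
  proof (rule eventually_sequentiallyI)
    fix N :: nat assume "1 \<le> N"
    have block: "A \<inter> {N<..2 * N} = (A \<inter> {1..2 * N}) - (A \<inter> {1..N})"
      by auto
    have sub: "A \<inter> {1..N} \<subseteq> A \<inter> {1..2 * N}"
      by auto
    have "card (A \<inter> {N<..2 * N}) = card (A \<inter> {1..2 * N}) - card (A \<inter> {1..N})"
      unfolding block by (rule card_Diff_subset[OF _ sub]) simp
    then have "real (card (A \<inter> {N<..2 * N})) = real (card (A \<inter> {1..2 * N})) - real (card (A \<inter> {1..N}))"
      using card_mono[OF _ sub] by simp
    with \<open>1 \<le> N\<close> show "2 * d (2 * N) - d N = real (card (A \<inter> {N<..2 * N})) / real N"
      by (simp add: d_def field_simps)
  qed
  ultimately show ?thesis
    by (auto intro: Lim_transform_eventually)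
qed

lemma infinite_if_density_pos:
  assumes dens: "(\<lambda>n. real (card (A \<inter> {1..n})) / real n) \<longlonglongrightarrow> \<delta>" and "0 < \<delta>"
  shows "infinite A"
proof
  assume "finite A"
  have "(\<lambda>n. real (card A) / real n) \<longlonglongrightarrow> 0"
    by real_asymp
  moreover have "real (card (A \<inter> {1..n})) / real n \<le> real (card A) / real n" for n
    using \<open>finite A\<close> by (intro divide_right_mono) (auto intro: card_mono)
  ultimately have "\<delta> \<le> 0"
    by (intro LIMSEQ_le[OF dens]) auto
  with \<open>0 < \<delta>\<close> show False by simp
qed

section \<open>The normalised law of a power series distribution\<close>

definition ps_norm_distr :: "(nat \<Rightarrow> real) \<Rightarrow> real \<Rightarrow> real measure" where
  "ps_norm_distr a t =
     distr (density (count_space UNIV) (\<lambda>n. ennreal (a n * t ^ n / ps_val a t))) borel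
       (\<lambda>n. (real n - ps_mean a t) / sqrt (ps_var a t))"

context
  fixes a :: "nat \<Rightarrow> real" and t :: real
  assumes nonneg: "\<And>n. 0 \<le> a n" and t: "0 \<le> t"
    and summable: "summable (\<lambda>n. a n * t ^ n)" and pos: "0 < ps_val a t"
begin

private abbreviation "weight n \<equiv> a n * t ^ n / ps_val a t"
private abbreviation "point n \<equiv> (real n - ps_mean a t) / sqrt (ps_var a t)"

private lemma weight_nonneg: "0 \<le> weight n"
  using nonneg t pos by simp

private lemma weight_sums: "weight sums 1"
  using sums_divide[OF summable_sums[OF summable], of "ps_val a t"] pos
  by (simp add: ps_val_def)

lemma real_distribution_ps_norm_distr: "real_distribution (ps_norm_distr a t)"
proof -
  have "prob_space (density (count_space UNIV) (\<lambda>n. ennreal (weight n)))"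
  proof
    have "emeasure (density (count_space UNIV) (\<lambda>n. ennreal (weight n))) UNIV = (\<Sum>n. ennreal (weight n))"
      by (simp add: emeasure_density nn_integral_count_space_nat)
    also have "\<dots> = 1"
      using weight_sums weight_nonneg by (simp add: suminf_ennreal2 sums_iff)
    finally show "emeasure (density (count_space UNIV) (\<lambda>n. ennreal (weight n)))
                    (space (density (count_space UNIV) (\<lambda>n. ennreal (weight n)))) = 1"
      by simp
  qed
  then show ?thesis
    unfolding ps_norm_distr_def by (intro prob_space.real_distribution_distr) auto
qed

lemma integral_ps_norm_distr:
  fixes f :: "real \<Rightarrow> 'b :: {banach, second_countable_topology}"
  assumes "f \<in> borel_measurable borel" and "\<And>x. norm (f x) \<le> 1"
  shows "integral\<^sup>L (ps_norm_distr a t) f = (\<Sum>n. weight n *\<^sub>R f (point n))"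
proof -
  have "norm (weight n *\<^sub>R f (point n)) \<le> weight n" for n
  proof -
    have "norm (weight n *\<^sub>R f (point n)) = weight n * norm (f (point n))"
      using weight_nonneg[of n] by (simp only: norm_scaleR abs_of_nonneg)
    also have "\<dots> \<le> weight n"
      using mult_left_mono[OF assms(2) weight_nonneg] by simp
    finally show ?thesis .
  qed
  then have "summable (\<lambda>n. norm (weight n *\<^sub>R f (point n)))"
    by (intro summable_comparison_test'[OF sums_summable[OF weight_sums], where N=0]) auto
  then have "integrable (count_space UNIV) (\<lambda>n. weight n *\<^sub>R f (point n))"
    by (simp add: integrable_count_space_nat_iff)
  then show ?thesis
    using assms(1) weight_nonneg unfolding ps_norm_distr_def
    by (simp add: integral_distr integral_density integral_count_space_nat)
qed

lemma char_ps_norm_distr: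
  "char (ps_norm_distr a t) u = (\<Sum>n. of_real (weight n) * iexp (u * point n))"
  unfolding char_def by (subst integral_ps_norm_distr) (auto simp: scaleR_conv_of_real)

lemma cdf_ps_norm_distr: "cdf (ps_norm_distr a t) x = ps_norm_cdf a t x"
proof -
  interpret real_distribution "ps_norm_distr a t"
    by (rule real_distribution_ps_norm_distr)
  have "cdf (ps_norm_distr a t) x = integral\<^sup>L (ps_norm_distr a t) (indicator {..x})"
    by (simp add: cdf_def)
  also have "\<dots> = (\<Sum>n. weight n *\<^sub>R (indicator {..x} (point n) :: real))"
    by (rule integral_ps_norm_distr) (auto simp: indicator_def)
  also have "\<dots> = ps_norm_cdf a t x"
    unfolding ps_norm_cdf_def
    by (subst suminf_divide[symmetric])
       (auto intro!: summable_comparison_test'[OF summable, where N=0] suminf_cong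
             simp: indicator_def nonneg t)
  finally show ?thesis .
qed

end

lemma measure_std_normal_singleton: "measure std_normal_distribution {x} = 0"
proof (rule measure_eq_0_null_sets)
  have "AE y in lborel. y \<in> {x} \<longrightarrow> ennreal (std_normal_density y) = 0"
    using AE_lborel_singleton[of x] by eventually_elim simp
  then show "{x} \<in> null_sets std_normal_distribution"
    by (subst null_sets_density_iff) auto
qed

text \<open>Levy's continuity theorem, transferred from sequences to the filter \<open>at_left R\<close>.\<close>

lemma gaussian_psI:
  assumes nonneg: "\<And>n. 0 \<le> a n"
    and regular: "\<forall>\<^sub>F t in at_left R. 0 \<le> t \<and> summable (\<lambda>n. a n * t ^ n) \<and> 0 < ps_val a t"
    and char: "\<And>u. ((\<lambda>t. char (ps_norm_distr a t) u) \<longlongrightarrow> char std_normal_distribution u) (at_left R)"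
  shows "gaussian_ps a R"
  unfolding gaussian_ps_def
proof
  fix x :: real
  obtain b where "b < R" and b: "\<And>t. b < t \<Longrightarrow> t < R \<Longrightarrow>
                     0 \<le> t \<and> summable (\<lambda>n. a n * t ^ n) \<and> 0 < ps_val a t"
    using regular by (auto simp: eventually_at_left_field)
  show "((\<lambda>t. ps_norm_cdf a t x) \<longlongrightarrow> measure std_normal_distribution {..x}) (at_left R)"
  proof (rule tendsto_at_left_sequentially[OF \<open>b < R\<close>])
    fix S :: "nat \<Rightarrow> real"
    assume S: "\<And>n. S n < R" "\<And>n. b < S n" "S \<longlonglongrightarrow> R"
    then have S_at_left: "filterlim S (at_left R) sequentially"
      by (auto simp: filterlim_at intro!: always_eventually less_imp_neq)
    note S_regular = b[OF S(2,1)]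
    have "weak_conv_m (\<lambda>n. ps_norm_distr a (S n)) std_normal_distribution"
      using nonneg S_regular filterlim_compose[OF char S_at_left]
      by (intro levy_continuity real_distribution_ps_norm_distr real_dist_normal_dist) auto
    then have "(\<lambda>n. cdf (ps_norm_distr a (S n)) x) \<longlonglongrightarrow> cdf std_normal_distribution x"
      using real_distribution.finite_borel_measure_M[OF real_dist_normal_dist, THEN finite_borel_measure.isCont_cdf]
            measure_std_normal_singleton
      by (auto simp: weak_conv_m_def weak_conv_def)
    moreover have "cdf (ps_norm_distr a (S n)) x = ps_norm_cdf a (S n) x" for n
      using nonneg S_regular by (intro cdf_ps_norm_distr) auto
    ultimately show "(\<lambda>n. ps_norm_cdf a (S n) x) \<longlonglongrightarrow> measure std_normal_distribution {..x}"
      by (simp add: cdf_def[of std_normal_distribution])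
  qed
qed

section \<open>Partitions with parts in \<open>A\<close>\<close>

definition sigma_in :: "nat set \<Rightarrow> nat \<Rightarrow> real" where
  "sigma_in A n = (\<Sum>j\<in>{j\<in>{1..n}. j \<in> A \<and> j dvd n}. real j)"

text \<open>Euler's recurrence for the number of partitions of \<open>n\<close> into parts from \<open>A\<close>; only the
  recurrence itself is used below.\<close>

function partitions_in :: "nat set \<Rightarrow> nat \<Rightarrow> real" where
  "partitions_in A n =
     (if n = 0 then 1 else (\<Sum>k=1..n. sigma_in A k * partitions_in A (n - k)) / real n)"
  by pat_completeness auto
termination by (relation "Wellfounded.measure snd") auto

declare partitions_in.simps[simp del]

lemma sigma_in_0 [simp]: "sigma_in A 0 = 0"
  by (simp add: sigma_in_def)

lemma sigma_in_nonneg: "0 \<le> sigma_in A n"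
  unfolding sigma_in_def by (intro sum_nonneg) auto

lemma sigma_in_le_square: "sigma_in A n \<le> real n ^ 2"
proof -
  have "sigma_in A n \<le> (\<Sum>j\<in>{1..n}. real j)"
    unfolding sigma_in_def by (rule sum_mono2) auto
  also have "\<dots> \<le> (\<Sum>j\<in>{1..n}. real n)"
    by (rule sum_mono) auto
  finally show ?thesis by (simp add: power2_eq_square)
qed

lemma sigma_in_ge_self: "n \<in> A \<Longrightarrow> 1 \<le> n \<Longrightarrow> real n \<le> sigma_in A n"
  unfolding sigma_in_def by (rule member_le_sum[of n, simplified]) auto

lemma partitions_in_0 [simp]: "partitions_in A 0 = 1"
  by (simp add: partitions_in.simps)

lemma partitions_in_rec: "real n * partitions_in A n = (\<Sum>k\<le>n. sigma_in A k * partitions_in A (n - k))"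
proof (cases "n = 0")
  case False
  have "{..n} = insert 0 {1..n}" by auto
  with False show ?thesis by (subst partitions_in.simps) simp
qed simp

lemma partitions_in_nonneg: "0 \<le> partitions_in A n"
proof (induction n rule: less_induct)
  case (less n)
  then show ?case
    by (subst partitions_in.simps)
       (auto intro!: divide_nonneg_nonneg sum_nonneg mult_nonneg_nonneg sigma_in_nonneg)
qed

lemma partitions_in_ge_1:
  assumes "n \<in> A" "1 \<le> n"
  shows "1 \<le> partitions_in A n"
proof -
  have "real n * 1 \<le> sigma_in A n * partitions_in A (n - n)"
    using sigma_in_ge_self[OF assms] by simp
  also have "\<dots> \<le> (\<Sum>k\<le>n. sigma_in A k * partitions_in A (n - k))"
    by (rule member_le_sum) (auto intro!: mult_nonneg_nonneg sigma_in_nonneg partitions_in_nonneg)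
  finally show ?thesis
    using assms by (simp add: partitions_in_rec[symmetric])
qed

lemma partitions_in_power_bounded:
  fixes r :: real
  assumes r: "0 < r" "r < 1"
  obtains K where "\<And>n. partitions_in A n * r ^ n \<le> K"
proof -
  define Q where "Q = (\<Sum>k. real k ^ 2 * r ^ k)"
  have Q: "(\<Sum>k\<le>n. real k ^ 2 * r ^ k) \<le> Q" for n
    unfolding Q_def using r summable_of_nat_power_mult_power[of r 2]
    by (intro sum_le_suminf) auto
  define N where "N = nat \<lceil>Q\<rceil> + 1"
  define K where "K = max 1 (Max ((\<lambda>n. partitions_in A n * r ^ n) ` {..<N}))"
  have "1 \<le> K" unfolding K_def by simp
  have "partitions_in A n * r ^ n \<le> K" for n
  proof (induction n rule: less_induct)
    case (less n)
    show ?case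
    proof (cases "n < N")
      case True
      then show ?thesis unfolding K_def by (intro max.coboundedI2 Max_ge) auto
    next
      case False
      then have "Q \<le> real n" "0 < n" unfolding N_def by linarith+
      \<comment> \<open>Each term of the recurrence is at most \<open>k\<^sup>2 r\<^sup>k K\<close>, and these sum to at most \<open>Q K \<le> n K\<close>.\<close>
      have "real n * (partitions_in A n * r ^ n) =
            (\<Sum>k\<le>n. sigma_in A k * partitions_in A (n - k)) * r ^ n"
        by (simp add: partitions_in_rec mult_ac)
      also have "\<dots> = (\<Sum>k\<le>n. (sigma_in A k * r ^ k) * (partitions_in A (n - k) * r ^ (n - k)))"
        unfolding sum_distrib_right by (intro sum.cong refl) (simp add: mult_ac flip: power_add)
      also have "\<dots> \<le> (\<Sum>k\<le>n. (real k ^ 2 * r ^ k) * K)"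
      proof (intro sum_mono)
        fix k assume "k \<in> {..n}"
        with less \<open>0 < n\<close> r show "(sigma_in A k * r ^ k) * (partitions_in A (n - k) * r ^ (n - k)) \<le>
                    (real k ^ 2 * r ^ k) * K"
          by (cases "k = 0")
             (auto intro!: mult_mono mult_right_mono mult_nonneg_nonneg sigma_in_le_square
                   sigma_in_nonneg partitions_in_nonneg)
      qed
      also have "\<dots> \<le> real n * K"
        unfolding sum_distrib_right[symmetric]
        using Q[of n] \<open>Q \<le> real n\<close> \<open>1 \<le> K\<close> by (intro mult_right_mono) auto
      finally show ?thesis using \<open>0 < n\<close> by simp
    qed
  qed
  then show ?thesis by (rule that)
qed

lemma summable_partitions_in:
  fixes t :: real
  assumes t: "0 \<le> t" "t < 1"
  shows "summable (\<lambda>n. real n ^ k * partitions_in A n * t ^ n)"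
proof -
  define s where "s = (1 + t) / 2"
  have s: "0 < s" "s < 1" "t < s" using t unfolding s_def by auto
  obtain K where K: "\<And>n. partitions_in A n * s ^ n \<le> K"
    using partitions_in_power_bounded[OF s(1,2)] by blast
  have "summable (\<lambda>n. K * (real n ^ k * (t / s) ^ n))"
    using s t by (intro summable_mult summable_of_nat_power_mult_power) auto
  then show ?thesis
  proof (rule summable_comparison_test'[where N=0])
    fix n
    have "real n ^ k * partitions_in A n * t ^ n = real n ^ k * (t / s) ^ n * (partitions_in A n * s ^ n)"
      using s by (simp add: power_divide)
    also have "\<dots> \<le> real n ^ k * (t / s) ^ n * K"
      using K s t by (intro mult_left_mono) auto
    finally show "norm (real n ^ k * partitions_in A n * t ^ n) \<le> K * (real n ^ k * (t / s) ^ n)"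
      using partitions_in_nonneg[of A n] t by (simp add: mult_ac)
  qed
qed

lemma summable_sigma_in:
  fixes t :: real
  assumes t: "0 \<le> t" "t < 1"
  shows "summable (\<lambda>n. real n ^ k * sigma_in A n * t ^ n)"
proof (rule summable_comparison_test'[OF summable_of_nat_power_mult_power[OF t, of "k + 2"], where N=0])
  fix n
  have "real n ^ k * sigma_in A n * t ^ n \<le> real n ^ k * real n ^ 2 * t ^ n"
    using sigma_in_le_square[of A n] t by (intro mult_right_mono mult_left_mono) auto
  then show "norm (real n ^ k * sigma_in A n * t ^ n) \<le> real n ^ (k + 2) * t ^ n"
    using sigma_in_nonneg[of A n] t by (simp add: power_add power2_eq_square mult_ac)
qed

lemma conv_radius_partitions_in_ge: "1 \<le> conv_radius (partitions_in A)"
proof (rule conv_radius_geI_ex')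
  fix r :: real
  assume "0 < r" "ereal r < 1"
  then show "summable (\<lambda>n. partitions_in A n * of_real r ^ n)"
    using summable_partitions_in[of r 0 A] by simp
qed

lemma conv_radius_partitions_in:
  assumes "infinite A" "A \<subseteq> {1..}"
  shows "conv_radius (partitions_in A) = 1"
proof (rule antisym[OF _ conv_radius_partitions_in_ge], rule ccontr)
  assume "\<not> conv_radius (partitions_in A) \<le> 1"
  then have "ereal (norm (1::real)) < conv_radius (partitions_in A)"
    by (simp add: not_le one_ereal_def)
  from summable_in_conv_radius[OF this] have sum: "summable (partitions_in A)"
    by simp
  obtain B where B: "finite B" "card B = nat \<lceil>suminf (partitions_in A)\<rceil> + 1" "B \<subseteq> A"
    using infinite_arbitrarily_large[OF assms(1)] by blast
  have "real (card B) \<le> (\<Sum>j\<in>B. partitions_in A j)"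
    using B assms(2) by (subst real_of_card) (intro sum_mono partitions_in_ge_1; auto)
  also have "\<dots> \<le> suminf (partitions_in A)"
    by (rule sum_le_suminf[OF sum B(1)]) (auto intro: partitions_in_nonneg)
  finally show False using B(2) by linarith
qed

section \<open>The product formula\<close>

definition log_partitions_in :: "nat set \<Rightarrow> nat \<Rightarrow> real" where
  "log_partitions_in A n = sigma_in A n / real n"

definition partitions_fps :: "nat set \<Rightarrow> complex fps" where
  "partitions_fps A = Abs_fps (\<lambda>n. of_real (partitions_in A n))"

definition log_partitions_fps :: "nat set \<Rightarrow> complex fps" where
  "log_partitions_fps A = Abs_fps (\<lambda>n. of_real (log_partitions_in A n))"

lemma log_partitions_in_nonneg: "0 \<le> log_partitions_in A n"
  by (simp add: log_partitions_in_def sigma_in_nonneg)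

lemma log_partitions_in_le: "log_partitions_in A n \<le> sigma_in A n"
  using sigma_in_nonneg[of A n]
  by (cases "n = 0")
     (auto simp: log_partitions_in_def divide_le_eq intro: mult_left_mono[of 1 "real n", simplified])

lemma of_nat_mult_log_partitions_in: "real n * log_partitions_in A n = sigma_in A n"
  by (cases "n = 0") (auto simp: log_partitions_in_def)

lemma fps_conv_radius_partitions_fps: "1 \<le> fps_conv_radius (partitions_fps A)"
  using conv_radius_partitions_in_ge[of A]
  by (simp add: fps_conv_radius_def partitions_fps_def conv_radius_of_real)

lemma fps_conv_radius_log_partitions_fps: "1 \<le> fps_conv_radius (log_partitions_fps A)"
proof -
  have "1 \<le> conv_radius (log_partitions_in A)"
  proof (rule conv_radius_geI_ex')
    fix r :: real
    assume r: "0 < r" "ereal r < 1"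
    show "summable (\<lambda>n. log_partitions_in A n * of_real r ^ n)"
    proof (rule summable_comparison_test'[OF summable_sigma_in[of r 0 A], where N=0])
      show "norm (log_partitions_in A n * of_real r ^ n) \<le> real n ^ 0 * sigma_in A n * r ^ n" for n
        using r log_partitions_in_le[of A n] log_partitions_in_nonneg[of A n]
        by (simp add: mult_right_mono)
    qed (use r in auto)
  qed
  then show ?thesis
    by (simp add: fps_conv_radius_def log_partitions_fps_def conv_radius_of_real)
qed

lemma fps_deriv_partitions_fps:
  "fps_deriv (partitions_fps A) = fps_deriv (log_partitions_fps A) * partitions_fps A"
proof (rule fps_ext)
  fix n
  have "real (Suc n) * partitions_in A (Suc n) = (\<Sum>k\<le>Suc n. sigma_in A k * partitions_in A (Suc n - k))"
    by (rule partitions_in_rec)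
  also have "\<dots> = (\<Sum>i\<le>n. real (Suc i) * log_partitions_in A (Suc i) * partitions_in A (n - i))"
    by (subst sum.atMost_Suc_shift) (simp add: of_nat_mult_log_partitions_in[symmetric])
  finally have "complex_of_real (real (Suc n) * partitions_in A (Suc n)) =
      of_real (\<Sum>i\<le>n. real (Suc i) * log_partitions_in A (Suc i) * partitions_in A (n - i))"
    by (rule arg_cong)
  then show "fps_nth (fps_deriv (partitions_fps A)) n =
             fps_nth (fps_deriv (log_partitions_fps A) * partitions_fps A) n"
    by (simp add: partitions_fps_def log_partitions_fps_def fps_mult_nth atLeast0AtMost)
qed

lemma sums_partitions_fps:
  assumes "norm z < 1"
  shows "(\<lambda>n. of_real (partitions_in A n) * z ^ n) sums eval_fps (partitions_fps A) z"
proof -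
  have "ereal (norm z) < 1" using assms by simp
  from sums_eval_fps[OF order.strict_trans2[OF this fps_conv_radius_partitions_fps]] show ?thesis
    by (simp add: partitions_fps_def)
qed

lemma sums_log_partitions_fps:
  assumes "norm z < 1"
  shows "(\<lambda>n. of_real (log_partitions_in A n) * z ^ n) sums eval_fps (log_partitions_fps A) z"
proof -
  have "ereal (norm z) < 1" using assms by simp
  from sums_eval_fps[OF order.strict_trans2[OF this fps_conv_radius_log_partitions_fps]] show ?thesis
    by (simp add: log_partitions_fps_def)
qed

lemma eval_partitions_fps_of_real:
  fixes t :: real
  assumes "0 \<le> t" "t < 1"
  shows "eval_fps (partitions_fps A) (of_real t) = of_real (\<Sum>n. partitions_in A n * t ^ n)"
proof -
  have "(\<lambda>n. complex_of_real (partitions_in A n * t ^ n)) sums of_real (\<Sum>n. partitions_in A n * t ^ n)"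
    using summable_partitions_in[OF assms, of 0 A] by (intro sums_of_real summable_sums) simp
  moreover have "(\<lambda>n. of_real (partitions_in A n) * of_real t ^ n) sums eval_fps (partitions_fps A) (of_real t)"
    using assms by (intro sums_partitions_fps) simp
  ultimately show ?thesis
    by (simp add: sums_iff)
qed

lemma eval_partitions_fps:
  assumes "norm z < 1"
  shows "eval_fps (partitions_fps A) z = exp (eval_fps (log_partitions_fps A) z)"
proof (rule eval_fps_eq_exp_eval_fps[where r=1])
  show "ereal 1 \<le> fps_conv_radius (partitions_fps A)" "ereal 1 \<le> fps_conv_radius (log_partitions_fps A)"
    unfolding one_ereal_def[symmetric]
    by (rule fps_conv_radius_partitions_fps fps_conv_radius_log_partitions_fps)+
qed (use assms fps_deriv_partitions_fps in \<open>simp_all add: partitions_fps_def log_partitions_fps_def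
                                                         log_partitions_in_def\<close>)

text \<open>Grouping the double series \<open>\<Sum>\<^sub>j\<^sub>\<in>\<^sub>A \<Sum>\<^sub>k\<^sub>\<ge>\<^sub>1 z\<^bsup>jk\<^esup>/k\<close> by \<open>n = jk\<close> gives the coefficients
  \<open>\<Sum>\<^sub>j\<^sub>\<in>\<^sub>A\<^sub>,\<^sub>j\<^sub>|\<^sub>n 1/(n/j) = \<sigma>\<^sub>A(n)/n\<close>.\<close>

lemma has_sum_log_partitions_fps:
  fixes z :: complex
  assumes A: "A \<subseteq> {1..}" and z: "norm z < 1"
  shows "((\<lambda>p. z ^ (fst p * snd p) / of_nat (snd p)) has_sum eval_fps (log_partitions_fps A) z)
           (Sigma A (\<lambda>_. {1..}))"
proof -
  define f where "f = (\<lambda>p. z ^ (fst p * snd p) / of_nat (snd p))"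
  define D where "D = (\<lambda>n. {j\<in>{1..n}. j \<in> A \<and> j dvd n})"
  define g where "g = (\<lambda>p. z ^ fst p * of_real (1 / real (fst p div snd p)))"
  have "f summable_on Sigma A (\<lambda>_. {1..})"
    unfolding f_def
    by (rule summable_on_subset_banach[OF abs_summable_summable[OF abs_summable_on_power_mult_div[OF z]]])
       (use A in auto)
  then obtain S where S: "(f has_sum S) (Sigma A (\<lambda>_. {1..}))"
    using has_sum_infsum by blast
  have "(f has_sum S) (Sigma A (\<lambda>_. {1..})) \<longleftrightarrow> (g has_sum S) (Sigma {1..} D)"
    using A
    by (intro has_sum_reindex_bij_witness[where i = "\<lambda>(n, j). (j, n div j)" and j = "\<lambda>(j, k). (j * k, j)"])
       (auto simp: D_def f_def g_def div_greater_zero_iff dvd_imp_le)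
  with S have "(g has_sum S) (Sigma {1..} D)"
    by simp
  moreover have "((\<lambda>j. g (n, j)) has_sum (of_real (log_partitions_in A n) * z ^ n)) (D n)" for n
  proof -
    have "(\<Sum>j\<in>D n. g (n, j)) = z ^ n * of_real (\<Sum>j\<in>D n. 1 / real (n div j))"
      by (simp add: g_def sum_distrib_left)
    also have "(\<Sum>j\<in>D n. 1 / real (n div j)) = (\<Sum>j\<in>D n. real j / real n)"
      by (intro sum.cong refl) (auto simp: D_def real_of_nat_div)
    also have "\<dots> = log_partitions_in A n"
      by (simp add: log_partitions_in_def sigma_in_def D_def sum_divide_distrib)
    finally show ?thesis
      using has_sum_finite[of "D n" "\<lambda>j. g (n, j)"] by (simp add: D_def mult.commute)
  qed
  ultimately have "((\<lambda>n. of_real (log_partitions_in A n) * z ^ n) has_sum S) {1..}"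
    by (rule has_sum_SigmaD)
  then have "((\<lambda>n. of_real (log_partitions_in A n) * z ^ n) has_sum S) UNIV"
    by (subst has_sum_cong_neutral[where T = "{1..}"]) (auto simp: log_partitions_in_def not_less_eq_eq)
  moreover have "(\<lambda>n. of_real (log_partitions_in A n) * z ^ n) sums eval_fps (log_partitions_fps A) z"
    by (rule sums_log_partitions_fps[OF z])
  ultimately have "S = eval_fps (log_partitions_fps A) z"
    using has_sum_imp_sums sums_unique2 by blast
  with S show ?thesis
    unfolding f_def by simp
qed

lemma log_partitions_fps_sums_Ln:
  fixes z :: complex
  assumes A: "A \<subseteq> {1..}" and z: "norm z < 1"
  shows "(\<lambda>j. if j \<in> A then - Ln (1 - z ^ j) else 0) sums eval_fps (log_partitions_fps A) z"
proof -
  have inner: "((\<lambda>k. z ^ (j * k) / of_nat k) has_sum - Ln (1 - z ^ j)) {1..}" if "j \<in> A" for j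
  proof -
    have "((\<lambda>k. (z ^ j) ^ k / of_nat k) has_sum - Ln (1 - z ^ j)) UNIV"
      using that A z by (intro has_sum_power_div_of_nat norm_power_lt_1) auto
    then show ?thesis
      by (subst has_sum_cong_neutral[where T = UNIV]) (auto simp: power_mult not_less_eq_eq)
  qed
  have "((\<lambda>j. - Ln (1 - z ^ j)) has_sum eval_fps (log_partitions_fps A) z) A"
    using has_sum_log_partitions_fps[OF A z] by (rule has_sum_SigmaD) (use inner in simp)
  then have "((\<lambda>j. if j \<in> A then - Ln (1 - z ^ j) else 0) has_sum eval_fps (log_partitions_fps A) z) UNIV"
    by (subst has_sum_cong_neutral[where T = A]) auto
  then show ?thesis
    by (rule has_sum_imp_sums)
qed

lemma PA_factor_has_prod:
  assumes A: "A \<subseteq> {1..}" and z: "norm z < 1"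
  shows "PA_factor A z has_prod eval_fps (partitions_fps A) z"
proof -
  have "PA_factor A z = (\<lambda>j. exp (if j \<in> A then - Ln (1 - z ^ j) else 0))"
  proof
    fix j
    show "PA_factor A z j = exp (if j \<in> A then - Ln (1 - z ^ j) else 0)"
    proof (cases "j \<in> A")
      case True
      then have "1 - z ^ j \<noteq> 0"
        using A z norm_power_lt_1[of z j] by auto
      with True show ?thesis
        by (simp add: PA_factor_def exp_minus divide_inverse)
    qed (simp add: PA_factor_def)
  qed
  then show ?thesis
    using sums_imp_has_prod_exp[OF log_partitions_fps_sums_Ln[OF A z]]
    by (simp add: has_prod_def eval_partitions_fps[OF z])
qed

section \<open>Mean and variance\<close>

definition sigma_moment :: "nat set \<Rightarrow> nat \<Rightarrow> real \<Rightarrow> real" where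
  "sigma_moment A k t = (\<Sum>n. real n ^ k * sigma_in A n * t ^ n)"

definition partitions_moment :: "nat set \<Rightarrow> nat \<Rightarrow> real \<Rightarrow> real" where
  "partitions_moment A k t = (\<Sum>n. real n ^ k * partitions_in A n * t ^ n)"

context
  fixes A :: "nat set" and t :: real
  assumes t: "0 \<le> t" "t < 1"
begin

lemma sums_sigma_moment: "(\<lambda>n. real n ^ k * sigma_in A n * t ^ n) sums sigma_moment A k t"
  unfolding sigma_moment_def using summable_sigma_in[OF t] by (rule summable_sums)

lemma sums_partitions_moment: "(\<lambda>n. real n ^ k * partitions_in A n * t ^ n) sums partitions_moment A k t"
  unfolding partitions_moment_def using summable_partitions_in[OF t] by (rule summable_sums)

lemma sigma_moment_nonneg: "0 \<le> sigma_moment A k t"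
  unfolding sigma_moment_def using t
  by (intro suminf_nonneg summable_sigma_in) (auto intro!: mult_nonneg_nonneg sigma_in_nonneg)

lemma partitions_moment_0_ge_1: "1 \<le> partitions_moment A 0 t"
  using sum_le_suminf[OF summable_partitions_in[OF t, of 0 A], of "{0}"] t
  by (simp add: partitions_moment_def partitions_in_nonneg)

lemma partitions_moment_1: "partitions_moment A 1 t = sigma_moment A 0 t * partitions_moment A 0 t"
proof -
  have "(\<lambda>n. (\<Sum>i\<le>n. sigma_in A i * partitions_in A (n - i)) * t ^ n) sums
          ((\<Sum>n. sigma_in A n * t ^ n) * (\<Sum>n. partitions_in A n * t ^ n))"
    using t summable_sigma_in[OF t, of 0 A] summable_partitions_in[OF t, of 0 A]
    by (intro sums_power_series_product) (auto intro!: mult_nonneg_nonneg sigma_in_nonneg partitions_in_nonneg)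
  then show ?thesis
    by (simp add: sigma_moment_def partitions_moment_def partitions_in_rec[symmetric] sums_iff)
qed

text \<open>Multiplying Euler's recurrence by \<open>n = i + (n - i)\<close> splits \<open>n\<^sup>2 p\<^sub>A(n)\<close> into two convolutions.\<close>

lemma partitions_moment_2:
  "partitions_moment A 2 t =
     sigma_moment A 1 t * partitions_moment A 0 t + sigma_moment A 0 t * partitions_moment A 1 t"
proof -
  have "(\<lambda>n. (\<Sum>i\<le>n. (real i * sigma_in A i) * partitions_in A (n - i)) * t ^ n) sums
          ((\<Sum>n. real n * sigma_in A n * t ^ n) * (\<Sum>n. partitions_in A n * t ^ n))"
    using t summable_sigma_in[OF t, of 1 A] summable_partitions_in[OF t, of 0 A]
    by (intro sums_power_series_product)
       (auto intro!: mult_nonneg_nonneg sigma_in_nonneg partitions_in_nonneg simp: mult_ac)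
  moreover have "(\<lambda>n. (\<Sum>i\<le>n. sigma_in A i * (real (n - i) * partitions_in A (n - i))) * t ^ n) sums
          ((\<Sum>n. sigma_in A n * t ^ n) * (\<Sum>n. real n * partitions_in A n * t ^ n))"
    using t summable_sigma_in[OF t, of 0 A] summable_partitions_in[OF t, of 1 A]
    by (intro sums_power_series_product[where y = "\<lambda>n. real n * partitions_in A n"])
       (auto intro!: mult_nonneg_nonneg sigma_in_nonneg partitions_in_nonneg simp: mult_ac)
  ultimately have "(\<lambda>n. (\<Sum>i\<le>n. (real i * sigma_in A i) * partitions_in A (n - i)) * t ^ n +
      (\<Sum>i\<le>n. sigma_in A i * (real (n - i) * partitions_in A (n - i))) * t ^ n) sums
      ((\<Sum>n. real n * sigma_in A n * t ^ n) * (\<Sum>n. partitions_in A n * t ^ n) +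
       (\<Sum>n. sigma_in A n * t ^ n) * (\<Sum>n. real n * partitions_in A n * t ^ n))"
    by (rule sums_add)
  moreover have "(\<Sum>i\<le>n. (real i * sigma_in A i) * partitions_in A (n - i)) +
      (\<Sum>i\<le>n. sigma_in A i * (real (n - i) * partitions_in A (n - i))) = real n ^ 2 * partitions_in A n" for n
  proof -
    have "(\<Sum>i\<le>n. (real i * sigma_in A i) * partitions_in A (n - i)) +
        (\<Sum>i\<le>n. sigma_in A i * (real (n - i) * partitions_in A (n - i))) =
        (\<Sum>i\<le>n. real n * (sigma_in A i * partitions_in A (n - i)))"
      unfolding sum.distrib[symmetric] by (intro sum.cong refl) (auto simp: algebra_simps)
    also have "\<dots> = real n ^ 2 * partitions_in A n"
      by (simp add: power2_eq_square partitions_in_rec flip: sum_distrib_left)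
    finally show ?thesis .
  qed
  ultimately show ?thesis
    by (simp add: partitions_moment_def sigma_moment_def sums_iff flip: distrib_right)
qed

lemma ps_val_partitions_in: "ps_val (partitions_in A) t = partitions_moment A 0 t"
  by (simp add: ps_val_def partitions_moment_def)

lemma ps_mean_partitions_in: "ps_mean (partitions_in A) t = sigma_moment A 0 t"
  using partitions_moment_0_ge_1 partitions_moment_1
  by (simp add: ps_mean_def ps_val_partitions_in partitions_moment_def)

lemma ps_var_partitions_in: "ps_var (partitions_in A) t = sigma_moment A 1 t"
proof -
  define m where "m = sigma_moment A 0 t"
  have "(\<lambda>n. real n ^ 2 * partitions_in A n * t ^ n - 2 * m * (real n ^ 1 * partitions_in A n * t ^ n)
             + m ^ 2 * (real n ^ 0 * partitions_in A n * t ^ n))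
        sums (partitions_moment A 2 t - 2 * m * partitions_moment A 1 t + m ^ 2 * partitions_moment A 0 t)"
    by (intro sums_add sums_diff sums_mult sums_partitions_moment)
  also have "partitions_moment A 2 t - 2 * m * partitions_moment A 1 t + m ^ 2 * partitions_moment A 0 t
             = sigma_moment A 1 t * partitions_moment A 0 t"
    unfolding partitions_moment_2 partitions_moment_1 m_def by (simp add: power2_eq_square algebra_simps)
  finally have "(\<lambda>n. (real n - ps_mean (partitions_in A) t)\<^sup>2 * partitions_in A n * t ^ n)
                  sums (sigma_moment A 1 t * partitions_moment A 0 t)"
    by (simp add: ps_mean_partitions_in m_def power2_eq_square algebra_simps)
  then show ?thesis
    using partitions_moment_0_ge_1 by (simp add: ps_var_def ps_val_partitions_in sums_iff)
qed

end

section \<open>Growth of the moments\<close>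

lemma sum_sigma_in_le_double_sum:
  fixes t :: real
  assumes "0 \<le> t"
  shows "(\<Sum>n<N. real n ^ 2 * sigma_in A n * t ^ n) \<le>
           (\<Sum>j=1..N. real j ^ 3 * (\<Sum>k=1..N. real k ^ 2 * (t ^ j) ^ k))"
proof -
  define P where "P = Sigma {..<N} (\<lambda>n. {j\<in>{1..n}. j dvd n})"
  have "(\<Sum>n<N. real n ^ 2 * sigma_in A n * t ^ n) \<le>
          (\<Sum>n<N. \<Sum>j\<in>{j\<in>{1..n}. j dvd n}. real n ^ 2 * real j * t ^ n)"
  proof (intro sum_mono)
    fix n
    have "real n ^ 2 * sigma_in A n * t ^ n =
            (\<Sum>j\<in>{j\<in>{1..n}. j \<in> A \<and> j dvd n}. real n ^ 2 * real j * t ^ n)"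
      unfolding sigma_in_def by (simp add: sum_distrib_left sum_distrib_right mult_ac)
    also have "\<dots> \<le> (\<Sum>j\<in>{j\<in>{1..n}. j dvd n}. real n ^ 2 * real j * t ^ n)"
      using assms by (intro sum_mono2) auto
    finally show "real n ^ 2 * sigma_in A n * t ^ n \<le> \<dots>" .
  qed
  also have "\<dots> = (\<Sum>p\<in>P. real (fst p) ^ 2 * real (snd p) * t ^ fst p)"
    unfolding P_def by (simp add: sum.Sigma case_prod_beta)
  also have "\<dots> = (\<Sum>q\<in>(\<lambda>p. (snd p, fst p div snd p)) ` P.
                     real (fst q * snd q) ^ 2 * real (fst q) * t ^ (fst q * snd q))"
    by (subst sum.reindex) (auto simp: P_def inj_on_def intro!: sum.cong)
  also have "\<dots> \<le> (\<Sum>q\<in>{1..N} \<times> {1..N}. real (fst q * snd q) ^ 2 * real (fst q) * t ^ (fst q * snd q))"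
  proof (rule sum_mono2)
    have "n div j \<le> N" if "n < N" for n j :: nat
      using div_le_dividend[of n j] that by linarith
    then show "(\<lambda>p. (snd p, fst p div snd p)) ` P \<subseteq> {1..N} \<times> {1..N}"
      by (auto simp: P_def div_greater_zero_iff dvd_imp_le)
  qed (use assms in auto)
  also have "\<dots> = (\<Sum>j=1..N. real j ^ 3 * (\<Sum>k=1..N. real k ^ 2 * (t ^ j) ^ k))"
    by (simp add: sum.cartesian_product case_prod_beta sum_distrib_left power_mult power_mult_distrib
                  mult_ac power2_eq_square power3_eq_cube)
  finally show ?thesis .
qed

text \<open>With \<open>t = v\<^sup>4\<close>: \<open>\<Sum> n\<^sup>2 \<sigma>\<^sub>A(n) t\<^sup>n \<le> \<Sum>\<^sub>j j\<^sup>3 \<Sum>\<^sub>k k\<^sup>2 t\<^bsup>jk\<^esup> \<le> \<Sum>\<^sub>j 2 v\<^sup>j/(1 - v)\<^sup>3 \<le> 2/(1 - v)\<^sup>4\<close>, and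
  \<open>1 - t \<le> 4 (1 - v)\<close>.\<close>

lemma sigma_moment_2_le:
  fixes t :: real
  assumes t: "0 < t" "t < 1"
  shows "sigma_moment A 2 t \<le> 512 / (1 - t) ^ 4"
proof -
  define v where "v = root 4 t"
  have v: "0 < v" "v < 1" "v ^ 4 = t"
    using t by (auto simp: v_def)
  have "(\<Sum>n<N. real n ^ 2 * sigma_in A n * t ^ n) \<le> 2 / (1 - v) ^ 4" for N
  proof -
    have "(\<Sum>n<N. real n ^ 2 * sigma_in A n * t ^ n) \<le>
            (\<Sum>j=1..N. real j ^ 3 * (\<Sum>k=1..N. real k ^ 2 * (t ^ j) ^ k))"
      using t by (intro sum_sigma_in_le_double_sum) simp
    also have "\<dots> \<le> (\<Sum>j=1..N. real j ^ 3 * (2 * t ^ j / (1 - t ^ j) ^ 3))"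
    proof (intro sum_mono mult_left_mono)
      fix j assume "j \<in> {1..N}"
      then have tj: "0 \<le> t ^ j" "t ^ j < 1"
        using t by (auto simp: power_less_one_iff)
      have "(\<Sum>k=1..N. real k ^ 2 * (t ^ j) ^ k) \<le> (\<Sum>k. real k ^ 2 * (t ^ j) ^ k)"
        using tj by (intro sum_le_suminf summable_of_nat_power_mult_power) auto
      also have "\<dots> \<le> 2 * t ^ j / (1 - t ^ j) ^ 3"
        by (rule suminf_square_mult_power_le[OF tj])
      finally show "(\<Sum>k=1..N. real k ^ 2 * (t ^ j) ^ k) \<le> 2 * t ^ j / (1 - t ^ j) ^ 3" .
    qed simp
    also have "\<dots> \<le> (\<Sum>j=1..N. 2 / (1 - v) ^ 3 * v ^ j)"
      using cube_mult_power_div_le[OF v(1,2)] by (intro sum_mono) (auto simp: v(3))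
    also have "\<dots> = 2 / (1 - v) ^ 3 * (\<Sum>j=1..N. v ^ j)"
      by (simp add: sum_distrib_left)
    also have "\<dots> \<le> 2 / (1 - v) ^ 3 * (\<Sum>j. v ^ j)"
      using v by (intro mult_left_mono sum_le_suminf) auto
    also have "\<dots> = 2 / (1 - v) ^ 4"
      using v by (simp add: suminf_geometric power_numeral_reduce)
    finally show ?thesis .
  qed
  then have "sigma_moment A 2 t \<le> 2 / (1 - v) ^ 4"
    unfolding sigma_moment_def using t by (intro suminf_le_const summable_sigma_in) auto
  also have "\<dots> \<le> 512 / (1 - t) ^ 4"
  proof -
    have "1 - t = (1 - v) * (1 + v + v ^ 2 + v ^ 3)"
      by (simp add: v(3)[symmetric] algebra_simps power_numeral_reduce)
    also have "\<dots> \<le> (1 - v) * 4"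
      using v power_le_one[of v 2] power_le_one[of v 3] by (intro mult_left_mono) auto
    finally have "(1 - t) ^ 4 \<le> ((1 - v) * 4) ^ 4"
      using t by (intro power_mono) auto
    then have "(1 - t) ^ 4 \<le> 256 * (1 - v) ^ 4"
      by (simp only: power_mult_distrib) simp
    then show ?thesis
      using v t by (simp add: field_simps)
  qed
  finally show ?thesis .
qed

lemma sigma_moment_1_ge_block:
  fixes t :: real
  assumes t: "0 < t" "t < 1"
  shows "real (card (A \<inter> {N<..2 * N})) * real N ^ 2 * t ^ (2 * N) \<le> sigma_moment A 1 t"
proof -
  define X where "X = A \<inter> {N<..2 * N}"
  have "real (card X) * real N ^ 2 * t ^ (2 * N) = (\<Sum>n\<in>X. real N * real N * t ^ (2 * N))"
    by (simp add: power2_eq_square)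
  also have "\<dots> \<le> (\<Sum>n\<in>X. real n * sigma_in A n * t ^ n)"
  proof (intro sum_mono mult_mono)
    fix n assume "n \<in> X"
    then have "n \<in> A" "1 \<le> n" "N \<le> n" "n \<le> 2 * N"
      unfolding X_def by auto
    then show "real N \<le> real n" "real N \<le> sigma_in A n" "t ^ (2 * N) \<le> t ^ n"
      using sigma_in_ge_self[of n A] t by (auto intro: power_decreasing)
  qed (use t sigma_in_nonneg in auto)
  also have "\<dots> \<le> sigma_moment A 1 t"
    using summable_sigma_in[of t 1 A] t sigma_in_nonneg[of A]
    unfolding sigma_moment_def power_one_right by (intro sum_le_suminf) (auto simp: X_def)
  finally show ?thesis
    unfolding X_def .
qed

text \<open>For \<open>N \<approx> 1/(4(1 - t))\<close> the block \<open>(N, 2N]\<close> carries weight \<open>t\<^bsup>2N\<^esup> \<ge> 1/2\<close> and contributes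
  about \<open>c N\<^sup>3 \<asymp> (1 - t)\<^sup>-\<^sup>3\<close> to the variance.\<close>

lemma sigma_moment_1_ge:
  fixes t c :: real
  assumes t: "7 / 8 \<le> t" "t < 1" and c: "0 \<le> c"
    and N: "N = nat \<lfloor>1 / (4 * (1 - t))\<rfloor>"
    and block: "c * real N \<le> real (card (A \<inter> {N<..2 * N}))"
  shows "c / 1024 / (1 - t) ^ 3 \<le> sigma_moment A 1 t"
proof -
  define u where "u = 1 - t"
  have u: "0 < u" "u \<le> 1 / 8"
    using t unfolding u_def by auto
  have "real N = real_of_int \<lfloor>1 / (4 * u)\<rfloor>"
    using u unfolding N u_def by simp
  then have "real N \<le> 1 / (4 * u)" "1 / (4 * u) - 1 < real N"
    by linarith+
  moreover have "1 \<le> 1 / (8 * u)"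
    using u by (simp add: field_simps)
  ultimately have N_le: "real N * u \<le> 1 / 4" and N_ge: "1 / (8 * u) \<le> real N"
    using u by (simp_all add: field_simps)
  have "1 - real (2 * N) * u \<le> t ^ (2 * N)"
    using Bernoulli_inequality[of "- u" "2 * N"] u unfolding u_def by (simp add: algebra_simps)
  then have half: "1 / 2 \<le> t ^ (2 * N)"
    using N_le by simp
  have "c / 1024 / u ^ 3 = c / 2 * (1 / (8 * u)) ^ 3"
    by (simp add: power_divide power_mult_distrib)
  also have "\<dots> \<le> c / 2 * real N ^ 3"
    using c u N_ge by (intro mult_left_mono power_mono) auto
  also have "\<dots> = (c * real N) * real N ^ 2 * (1 / 2)"
    by (simp add: power2_eq_square power3_eq_cube)
  also have "\<dots> \<le> real (card (A \<inter> {N<..2 * N})) * real N ^ 2 * t ^ (2 * N)"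
    using block half c by (intro mult_mono) auto
  also have "\<dots> \<le> sigma_moment A 1 t"
    using t by (intro sigma_moment_1_ge_block) auto
  finally show ?thesis
    unfolding u_def .
qed

lemma sigma_moment_1_lower:
  assumes dens: "(\<lambda>n. real (card (A \<inter> {1..n})) / real n) \<longlonglongrightarrow> \<delta>" and "0 < \<delta>"
  shows "\<forall>\<^sub>F t in at_left 1. \<delta> / 2048 / (1 - t) ^ 3 \<le> sigma_moment A 1 t"
proof -
  define N where "N t = nat \<lfloor>1 / (4 * (1 - t))\<rfloor>" for t :: real
  have "filterlim (\<lambda>t::real. 1 / (4 * (1 - t))) at_top (at_left 1)"
    by real_asymp
  then have "filterlim N sequentially (at_left 1)"
    unfolding N_def
    by (intro filterlim_compose[OF filterlim_nat_sequentially] filterlim_compose[OF filterlim_floor_sequentially])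
  moreover have "\<forall>\<^sub>F M in sequentially. \<delta> / 2 * real M \<le> real (card (A \<inter> {M<..2 * M}))"
  proof -
    have "\<forall>\<^sub>F M in sequentially. \<delta> / 2 < real (card (A \<inter> {M<..2 * M})) / real M \<and> 0 < M"
      using card_dyadic_block_tendsto[OF dens] \<open>0 < \<delta>\<close>
      by (intro eventually_conj order_tendstoD(1) eventually_gt_at_top) auto
    then show ?thesis
      by eventually_elim (metis less_imp_le of_nat_0_less_iff pos_less_divide_eq)
  qed
  ultimately have "\<forall>\<^sub>F t in at_left 1. \<delta> / 2 * real (N t) \<le> real (card (A \<inter> {N t<..2 * N t}))"
    by (rule eventually_compose_filterlim[rotated])
  moreover have "\<forall>\<^sub>F t in at_left (1::real). t \<in> {7 / 8<..<1}"
    by (rule eventually_at_left_real) simp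
  ultimately show ?thesis
  proof eventually_elim
    case (elim t)
    then show ?case
      using sigma_moment_1_ge[of t "\<delta> / 2" "N t" A] \<open>0 < \<delta>\<close> by (simp add: N_def)
  qed
qed

lemma sigma_moment_ratio_tendsto_0:
  assumes dens: "(\<lambda>n. real (card (A \<inter> {1..n})) / real n) \<longlonglongrightarrow> \<delta>" and "0 < \<delta>"
  shows "((\<lambda>t. sigma_moment A 2 t / sqrt (sigma_moment A 1 t) ^ 3) \<longlongrightarrow> 0) (at_left 1)"
proof (rule tendsto_sandwich[where f = "\<lambda>_. 0"])
  define \<kappa> where "\<kappa> = \<delta> / 2048"
  have "0 < \<kappa>" using \<open>0 < \<delta>\<close> by (simp add: \<kappa>_def)
  have "\<forall>\<^sub>F t in at_left 1. \<kappa> / (1 - t) ^ 3 \<le> sigma_moment A 1 t \<and> t \<in> {0<..<1}"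
    unfolding \<kappa>_def
    by (intro eventually_conj sigma_moment_1_lower[OF assms] eventually_at_left_real) simp
  then show "\<forall>\<^sub>F t in at_left 1. sigma_moment A 2 t / sqrt (sigma_moment A 1 t) ^ 3 \<le> 512 / sqrt \<kappa> ^ 3 * sqrt (1 - t)"
  proof eventually_elim
    case (elim t)
    define u where "u = 1 - t"
    have t: "0 < t" "t < 1" and u: "0 < u"
      using elim by (auto simp: u_def)
    have "sqrt \<kappa> / (u * sqrt u) = sqrt (\<kappa> / u ^ 3)"
      using u by (simp add: real_sqrt_divide power3_eq_cube real_sqrt_mult)
    also have "\<dots> \<le> sqrt (sigma_moment A 1 t)"
      using elim by (simp add: u_def)
    finally have "(sqrt \<kappa> / (u * sqrt u)) ^ 3 \<le> sqrt (sigma_moment A 1 t) ^ 3"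
      using \<open>0 < \<kappa>\<close> u by (intro power_mono) auto
    then have "sigma_moment A 2 t / sqrt (sigma_moment A 1 t) ^ 3 \<le> (512 / u ^ 4) / (sqrt \<kappa> / (u * sqrt u)) ^ 3"
      using sigma_moment_2_le[OF t, of A] sigma_moment_nonneg[of t A 2] t \<open>0 < \<kappa>\<close> u
      by (intro frac_le) (auto simp: u_def)
    also have "\<dots> = 512 / sqrt \<kappa> ^ 3 * sqrt u"
      using u \<open>0 < \<kappa>\<close> by (simp add: field_simps power3_eq_cube power4_eq_xxxx)
    finally show ?case
      by (simp add: u_def)
  qed
  show "\<forall>\<^sub>F t in at_left 1. 0 \<le> sigma_moment A 2 t / sqrt (sigma_moment A 1 t) ^ 3"
    by (rule eventually_at_left_real[of 0, THEN eventually_mono])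
       (auto intro!: divide_nonneg_nonneg sigma_moment_nonneg)
  show "((\<lambda>t. 512 / sqrt \<kappa> ^ 3 * sqrt (1 - t)) \<longlongrightarrow> 0) (at_left (1::real))"
    by real_asymp
qed simp

section \<open>The characteristic function\<close>

definition log_char_partitions :: "nat set \<Rightarrow> real \<Rightarrow> real \<Rightarrow> complex" where
  "log_char_partitions A u t =
     (let \<theta> = u / sqrt (sigma_moment A 1 t)
      in eval_fps (log_partitions_fps A) (of_real t * iexp \<theta>) - eval_fps (log_partitions_fps A) (of_real t)
         - \<i> * of_real (\<theta> * sigma_moment A 0 t))"

lemma char_ps_norm_distr_partitions_in:
  fixes t :: real
  assumes t: "0 \<le> t" "t < 1"
  shows "char (ps_norm_distr (partitions_in A) t) u = exp (log_char_partitions A u t)"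
proof -
  define \<theta> where "\<theta> = u / sqrt (sigma_moment A 1 t)"
  define m where "m = sigma_moment A 0 t"
  define F where "F = partitions_moment A 0 t"
  define z where "z = of_real t * iexp \<theta>"
  have F: "1 \<le> F"
    unfolding F_def using t by (rule partitions_moment_0_ge_1)
  have z: "norm z < 1"
    using t by (simp add: z_def norm_mult)
  have "char (ps_norm_distr (partitions_in A) t) u =
          (\<Sum>n. of_real (partitions_in A n * t ^ n / F) * iexp (u * ((real n - m) / sqrt (sigma_moment A 1 t))))"
    using t F partitions_in_nonneg summable_partitions_in[OF t, of 0 A]
    by (subst char_ps_norm_distr)
       (simp_all add: ps_val_partitions_in ps_mean_partitions_in ps_var_partitions_in F_def m_def)
  also have "\<dots> = (\<Sum>n. iexp (- (\<theta> * m)) / of_real F * (of_real (partitions_in A n) * z ^ n))"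
  proof (rule suminf_cong)
    fix n
    have "u * ((real n - m) / sqrt (sigma_moment A 1 t)) = real n * \<theta> + - (\<theta> * m)"
      by (simp add: \<theta>_def diff_divide_distrib algebra_simps)
    then have "iexp (u * ((real n - m) / sqrt (sigma_moment A 1 t))) = iexp (real n * \<theta>) * iexp (- (\<theta> * m))"
      by (simp only: of_real_add distrib_left exp_add)
    then show "of_real (partitions_in A n * t ^ n / F) * iexp (u * ((real n - m) / sqrt (sigma_moment A 1 t))) =
               iexp (- (\<theta> * m)) / of_real F * (of_real (partitions_in A n) * z ^ n)"
      by (simp add: z_def iexp_power field_simps del: of_real_mult)
         (simp add: mult_ac)
  qed
  also have "\<dots> = iexp (- (\<theta> * m)) / of_real F * eval_fps (partitions_fps A) z"
    using sums_unique[OF sums_mult[OF sums_partitions_fps[OF z]]] by simp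
  also have "of_real F = eval_fps (partitions_fps A) (of_real t)"
    using eval_partitions_fps_of_real[OF t] by (simp add: F_def partitions_moment_def)
  also have "iexp (- (\<theta> * m)) / eval_fps (partitions_fps A) (of_real t) * eval_fps (partitions_fps A) z =
               exp (log_char_partitions A u t)"
    using t z
    by (simp add: eval_partitions_fps log_char_partitions_def Let_def z_def m_def \<theta>_def
                  exp_diff exp_add[symmetric] field_simps)
  finally show ?thesis .
qed

text \<open>Termwise second-order Taylor expansion of \<open>log P\<^sub>A(t e\<^bsup>i\<theta>\<^esup>) = \<Sum> c\<^sub>n t\<^sup>n e\<^bsup>in\<theta>\<^esup>\<close>,
  where \<open>\<Sum> n c\<^sub>n t\<^sup>n\<close> and \<open>\<Sum> n\<^sup>2 c\<^sub>n t\<^sup>n\<close> are the mean and the variance.\<close>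

lemma log_char_partitions_sums:
  fixes t u :: real
  assumes t: "0 \<le> t" "t < 1" and var: "0 < sigma_moment A 1 t"
  defines "\<theta> \<equiv> u / sqrt (sigma_moment A 1 t)"
  shows "(\<lambda>n. of_real (log_partitions_in A n * t ^ n) *
            (iexp (real n * \<theta>) - (\<Sum>k\<le>2. (\<i> * of_real (real n * \<theta>)) ^ k / fact k)))
           sums (log_char_partitions A u t + of_real (u ^ 2 / 2))"
proof -
  define z where "z = of_real t * iexp \<theta>"
  let ?L = "eval_fps (log_partitions_fps A)"
  have z: "norm z < 1"
    using t by (simp add: z_def norm_mult)
  have moment: "(\<lambda>n. complex_of_real (real n ^ k * sigma_in A n * t ^ n)) sums of_real (sigma_moment A k t)" for k
    using t by (intro sums_of_real sums_sigma_moment) auto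
  have "(\<lambda>n. of_real (log_partitions_in A n) * z ^ n - of_real (log_partitions_in A n) * of_real t ^ n
               - \<i> * of_real \<theta> * of_real (real n ^ 0 * sigma_in A n * t ^ n)
               + of_real (\<theta> ^ 2 / 2) * of_real (real n ^ 1 * sigma_in A n * t ^ n))
        sums (?L z - ?L (of_real t) - \<i> * of_real \<theta> * of_real (sigma_moment A 0 t)
                + of_real (\<theta> ^ 2 / 2) * of_real (sigma_moment A 1 t))"
    using t by (intro sums_add sums_diff sums_mult moment sums_log_partitions_fps z) simp
  also have "(\<lambda>n. of_real (log_partitions_in A n) * z ^ n - of_real (log_partitions_in A n) * of_real t ^ n
               - \<i> * of_real \<theta> * of_real (real n ^ 0 * sigma_in A n * t ^ n)
               + of_real (\<theta> ^ 2 / 2) * of_real (real n ^ 1 * sigma_in A n * t ^ n)) =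
             (\<lambda>n. of_real (log_partitions_in A n * t ^ n) *
               (iexp (real n * \<theta>) - (\<Sum>k\<le>2. (\<i> * of_real (real n * \<theta>)) ^ k / fact k)))"
    by (rule ext) (simp add: z_def iexp_power eval_nat_numeral field_simps flip: of_nat_mult_log_partitions_in)
  also have "?L z - ?L (of_real t) - \<i> * of_real \<theta> * of_real (sigma_moment A 0 t)
               + of_real (\<theta> ^ 2 / 2) * of_real (sigma_moment A 1 t) = log_char_partitions A u t + of_real (u ^ 2 / 2)"
  proof -
    have "\<theta> ^ 2 / 2 * sigma_moment A 1 t = u ^ 2 / 2"
      using var by (simp add: \<theta>_def power_divide)
    then have "of_real (\<theta> ^ 2 / 2) * of_real (sigma_moment A 1 t) = (of_real (u ^ 2 / 2) :: complex)"
      unfolding of_real_mult[symmetric] by simp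
    then show ?thesis
      unfolding log_char_partitions_def Let_def \<theta>_def[symmetric] z_def[symmetric] by (simp add: mult_ac)
  qed
  finally show ?thesis .
qed

lemma norm_log_char_partitions_le:
  fixes t :: real
  assumes t: "0 < t" "t < 1" and var: "0 < sigma_moment A 1 t"
  shows "norm (log_char_partitions A u t + of_real (u ^ 2 / 2))
           \<le> \<bar>u\<bar> ^ 3 / 6 * (sigma_moment A 2 t / sqrt (sigma_moment A 1 t) ^ 3)"
proof -
  define \<theta> where "\<theta> = u / sqrt (sigma_moment A 1 t)"
  define c where "c n = log_partitions_in A n * t ^ n" for n
  have sums: "(\<lambda>n. of_real (c n) * (iexp (real n * \<theta>) - (\<Sum>k\<le>2. (\<i> * of_real (real n * \<theta>)) ^ k / fact k)))
               sums (log_char_partitions A u t + of_real (u ^ 2 / 2))"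
    using log_char_partitions_sums[OF less_imp_le[OF t(1)] t(2) var, of u]
    unfolding \<theta>_def[symmetric] c_def[symmetric] .
  have "norm (of_real (c n) * (iexp (real n * \<theta>) - (\<Sum>k\<le>2. (\<i> * of_real (real n * \<theta>)) ^ k / fact k)))
          \<le> \<bar>\<theta>\<bar> ^ 3 / 6 * (real n ^ 2 * sigma_in A n * t ^ n)" for n
  proof -
    have c: "0 \<le> c n"
      using t log_partitions_in_nonneg[of A n] by (simp add: c_def)
    have "norm (of_real (c n) * (iexp (real n * \<theta>) - (\<Sum>k\<le>2. (\<i> * of_real (real n * \<theta>)) ^ k / fact k)))
            \<le> c n * (\<bar>real n * \<theta>\<bar> ^ Suc 2 / fact (Suc 2))"
      unfolding norm_mult norm_of_real abs_of_nonneg[OF c] by (rule mult_left_mono[OF iexp_approx1 c])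
    also have "\<dots> = \<bar>\<theta>\<bar> ^ 3 / 6 * ((real n * log_partitions_in A n) * real n ^ 2 * t ^ n)"
      by (simp add: c_def abs_mult power_mult_distrib fact_numeral power3_eq_cube power2_eq_square)
    finally show ?thesis
      unfolding of_nat_mult_log_partitions_in by (simp add: mult_ac)
  qed
  then have "norm (log_char_partitions A u t + of_real (u ^ 2 / 2))
               \<le> (\<Sum>n. \<bar>\<theta>\<bar> ^ 3 / 6 * (real n ^ 2 * sigma_in A n * t ^ n))"
    using t by (intro norm_sums_le[OF sums] summable_mult summable_sigma_in) auto
  also have "\<dots> = \<bar>\<theta>\<bar> ^ 3 / 6 * sigma_moment A 2 t"
    unfolding sigma_moment_def using t by (intro suminf_mult summable_sigma_in) auto
  also have "\<dots> = \<bar>u\<bar> ^ 3 / 6 * (sigma_moment A 2 t / sqrt (sigma_moment A 1 t) ^ 3)"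
    using var by (simp add: \<theta>_def power_divide)
  finally show ?thesis .
qed

lemma char_ps_norm_distr_partitions_in_tendsto:
  assumes dens: "(\<lambda>n. real (card (A \<inter> {1..n})) / real n) \<longlonglongrightarrow> \<delta>" and "0 < \<delta>"
  shows "((\<lambda>t. char (ps_norm_distr (partitions_in A) t) u) \<longlongrightarrow> char std_normal_distribution u) (at_left 1)"
proof -
  define R where "R t = log_char_partitions A u t + of_real (u ^ 2 / 2)" for t
  have "\<forall>\<^sub>F t in at_left (1::real). t \<in> {0<..<1}"
    by (rule eventually_at_left_real) simp
  with sigma_moment_1_lower[OF assms]
  have regular: "\<forall>\<^sub>F t in at_left 1. t \<in> {0<..<1} \<and> 0 < sigma_moment A 1 t"
  proof eventually_elim
    case (elim t)
    moreover have "0 < \<delta> / 2048 / (1 - t) ^ 3"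
      using elim \<open>0 < \<delta>\<close> by simp
    ultimately show ?case
      by linarith
  qed
  have "((\<lambda>t. \<bar>u\<bar> ^ 3 / 6 * (sigma_moment A 2 t / sqrt (sigma_moment A 1 t) ^ 3)) \<longlongrightarrow> \<bar>u\<bar> ^ 3 / 6 * 0)
          (at_left 1)"
    by (intro tendsto_mult tendsto_const sigma_moment_ratio_tendsto_0[OF assms])
  then have bound_tendsto:
    "((\<lambda>t. \<bar>u\<bar> ^ 3 / 6 * (sigma_moment A 2 t / sqrt (sigma_moment A 1 t) ^ 3)) \<longlongrightarrow> 0) (at_left 1)"
    by simp
  have "\<forall>\<^sub>F t in at_left 1. norm (R t) \<le> \<bar>u\<bar> ^ 3 / 6 * (sigma_moment A 2 t / sqrt (sigma_moment A 1 t) ^ 3)"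
    using regular by eventually_elim (unfold R_def, rule norm_log_char_partitions_le, auto)
  from this bound_tendsto have "(R \<longlongrightarrow> 0) (at_left 1)"
    by (rule Lim_null_comparison)
  then have "((\<lambda>t. exp (- of_real (u ^ 2 / 2) + R t)) \<longlongrightarrow> exp (- of_real (u ^ 2 / 2) + 0)) (at_left 1)"
    by (intro tendsto_intros)
  also have "exp (- of_real (u ^ 2 / 2) + 0) = char std_normal_distribution u"
    by (simp add: char_std_normal_distribution exp_of_real[symmetric])
  finally show ?thesis
    by (rule Lim_transform_eventually)
       (use regular in \<open>eventually_elim, simp add: R_def char_ps_norm_distr_partitions_in\<close>)
qed

lemma gaussian_ps_partitions_in:
  assumes "(\<lambda>n. real (card (A \<inter> {1..n})) / real n) \<longlonglongrightarrow> \<delta>" and "0 < \<delta>"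
  shows "gaussian_ps (partitions_in A) 1"
proof (rule gaussian_psI[OF partitions_in_nonneg])
  show "\<forall>\<^sub>F t in at_left 1. 0 \<le> t \<and> summable (\<lambda>n. partitions_in A n * t ^ n) \<and> 0 < ps_val (partitions_in A) t"
    using eventually_at_left_real[of 0 "1::real"]
  proof (rule eventually_mono)
    fix t :: real
    assume "t \<in> {0<..<1}"
    then have t: "0 \<le> t" "t < 1" by auto
    show "0 \<le> t \<and> summable (\<lambda>n. partitions_in A n * t ^ n) \<and> 0 < ps_val (partitions_in A) t"
      using t summable_partitions_in[OF t, of 0 A] partitions_moment_0_ge_1[OF t, of A]
      by (simp add: ps_val_partitions_in)
  qed simp
qed (rule char_ps_norm_distr_partitions_in_tendsto[OF assms])

lemma in_class_K_partitions_in: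
  assumes "infinite A" "A \<subseteq> {1..}"
  shows "in_class_K (partitions_in A)"
proof -
  obtain j where "j \<in> A"
    using infinite_imp_nonempty[OF assms(1)] by blast
  then have "0 < j" "partitions_in A j \<noteq> 0"
    using assms(2) partitions_in_ge_1[of j A] by auto
  then show ?thesis
    unfolding in_class_K_def conv_radius_partitions_in[OF assms] by (auto intro: partitions_in_nonneg)
qed

theorem mainTheorem12:
  fixes A :: "nat set" and \<delta> :: real
  assumes "A \<subseteq> {1..}"
    and "(\<lambda>n. real (card (A \<inter> {1..n})) / real n) \<longlonglongrightarrow> \<delta>"
    and "\<delta> > 0"
  shows "\<exists>a :: nat \<Rightarrow> real.
           in_class_K a \<and> conv_radius a = 1 \<and>
           (\<forall>z::complex. norm z < 1 \<longrightarrow>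
               summable (\<lambda>n. of_real (a n) * z ^ n) \<and>
               PA_factor A z has_prod (\<Sum>n. of_real (a n) * z ^ n)) \<and>
           gaussian_ps a 1"
proof (intro exI[of _ "partitions_in A"] conjI allI impI)
  have "infinite A"
    using assms(2,3) by (rule infinite_if_density_pos)
  then show "in_class_K (partitions_in A)" "conv_radius (partitions_in A) = 1"
    using assms(1) by (rule in_class_K_partitions_in, rule conv_radius_partitions_in)
  show "gaussian_ps (partitions_in A) 1"
    using assms(2,3) by (rule gaussian_ps_partitions_in)
  fix z :: complex
  assume "norm z < 1"
  then have "(\<lambda>n. of_real (partitions_in A n) * z ^ n) sums eval_fps (partitions_fps A) z"
    by (rule sums_partitions_fps)
  then show "summable (\<lambda>n. of_real (partitions_in A n) * z ^ n)"
    and "PA_factor A z has_prod (\<Sum>n. of_real (partitions_in A n) * z ^ n)"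
    using PA_factor_has_prod[OF assms(1) \<open>norm z < 1\<close>] by (simp_all add: sums_iff)
qed

end
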